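(* Let $f$ be an analytic self-map of $\mathbb{B}^N$ and let $e_1=(1,0)\in\partial\mathbb{B}^N$ be a boundary repelling fixed point of $f$ with multiplier $\alpha>1$. Let $\{Z_n\}_{n=1}^\infty$ be a backward-iteration sequence for $f$ (i.e. $f(Z_{n+1})=Z_n$) with $Z_n\to e_1$ and $d_{\mathbb{B}^N}(Z_n,Z_{n+1})\le a=\frac{\alpha-1}{\alpha+1}$ for all $n$. Let $(z_n,w_n)=\widetilde{\mathcal{C}}(Z_n)\in\mathbb{H}^N$, where $\widetilde{\mathcal{C}}(u,v)=\left(\frac{1-u}{1+u},\frac{v}{1+u}\right)$, and let $t_n=\operatorname{Re} z_n-\|w_n\|^2$. Then \[\lim_{n\to\infty}\frac{\operatorname{Re} z_n}{t_n}=1,\quad \lim_{n\to\infty}\frac{\operatorname{Im} z_n}{t_n}=0,\quad \lim_{n\to\infty}\frac{\|w_n\|^2}{t_n}=0,\quad \lim_{n\to\infty}\frac{t_n}{t_{n+1}}=\alpha.\] In particular, the sequence $\{Z_n\}$ is special, i.e. $\displaystyle\lim_{n\to\infty}\frac{\|Z_n-(Z_n,e_1)e_1\|^2}{1-|(Z_n,e_1)|^2}=0$.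
   Context: $\mathbb{B}^N$ is the unit ball of $\mathbb{C}^N$ with $(Z,W)=\sum Z_j\overline{W_j}$, $d_{\mathbb{B}^N}(Z,W)^2=1-\frac{(1-\|Z\|^2)(1-\|W\|^2)}{|1-(Z,W)|^2}$. $\mathbb{H}^N=\{(z,w)\in\mathbb{C}\times\mathbb{C}^{N-1}:\operatorname{Re} z>\|w\|^2\}$ is the Siegel domain; $\widetilde{\mathcal{C}}$ is a biholomorphism $\mathbb{B}^N\to\mathbb{H}^N$ sending $e_1$ to $0$. Horospheres: $H(X,R)=\{Z:\frac{|1-(Z,X)|^2}{1-\|Z\|^2}<R\}$. A point $q\in\partial\mathbb{B}^N$ is a boundary repelling fixed point of $f$ with multiplier $\alpha>1$ if $\alpha$ is the smallest constant with $f(H(q,R))\subseteq H(q,\alpha R)$ for all $R>0$ (equivalently $\alpha=\liminf_{Z\to q}\frac{1-\|f(Z)\|}{1-\|Z\|}$). *)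

theory Defs
  imports "HOL-Analysis.Analysis"
begin

text \<open>C^N is modelled as complex^'n (N = CARD('n)); the norm on complex^'n is the
Euclidean (L2) norm. The distinguished coordinate of e_1 is an index i0 :: 'n.\<close>

definition cinner :: "complex^'n \<Rightarrow> complex^'n \<Rightarrow> complex" where
  "cinner Z W = (\<Sum>i\<in>UNIV. Z$i * cnj (W$i))"

definition unit_ball :: "(complex^'n) set" where
  "unit_ball = {Z. norm Z < 1}"

definition unit_sphere :: "(complex^'n) set" where
  "unit_sphere = {Z. norm Z = 1}"

definition holo_on :: "(complex^'n) set \<Rightarrow> (complex^'n \<Rightarrow> complex^'m) \<Rightarrow> bool" where
  "holo_on S f \<longleftrightarrow> (\<forall>Z\<in>S. \<exists>L. (f has_derivative L) (at Z) \<and> (\<forall>c z. L (c *s z) = c *s L z))"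

definition analytic_selfmap_ball :: "(complex^'n \<Rightarrow> complex^'n) \<Rightarrow> bool" where
  "analytic_selfmap_ball f \<longleftrightarrow> holo_on unit_ball f \<and> f ` unit_ball \<subseteq> unit_ball"

definition dB :: "complex^'n \<Rightarrow> complex^'n \<Rightarrow> real" where
  "dB Z W = sqrt (1 - (1 - (norm Z)\<^sup>2) * (1 - (norm W)\<^sup>2) / (cmod (1 - cinner Z W))\<^sup>2)"

definition horo :: "complex^'n \<Rightarrow> real \<Rightarrow> (complex^'n) set" where
  "horo X R = {Z \<in> unit_ball. (cmod (1 - cinner Z X))\<^sup>2 / (1 - (norm Z)\<^sup>2) < R}"

definition boundary_repelling_fp :: "(complex^'n \<Rightarrow> complex^'n) \<Rightarrow> complex^'n \<Rightarrow> real \<Rightarrow> bool" where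
  "boundary_repelling_fp f q \<alpha> \<longleftrightarrow>
     q \<in> unit_sphere \<and> \<alpha> > 1 \<and>
     (\<forall>R>0. f ` horo q R \<subseteq> horo q (\<alpha> * R)) \<and>
     (\<forall>\<beta>. (\<forall>R>0. f ` horo q R \<subseteq> horo q (\<beta> * R)) \<longrightarrow> \<alpha> \<le> \<beta>)"

text \<open>Cayley transform C~(u,v) = ((1-u)/(1+u), v/(1+u)), where u = Z$i0 and v the other
coordinates. The w-component is returned as a vector whose i0-coordinate is 0.\<close>
definition cayley_z :: "'n \<Rightarrow> complex^'n \<Rightarrow> complex" where
  "cayley_z i0 Z = (1 - Z$i0) / (1 + Z$i0)"

definition cayley_w :: "'n \<Rightarrow> complex^'n \<Rightarrow> complex^'n" where
  "cayley_w i0 Z = (\<chi> i. if i = i0 then 0 else Z$i / (1 + Z$i0))"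

end

theory Submission
  imports Defs "HOL-Complex_Analysis.Riemann_Mapping"
begin

text \<open>
  The Cayley transform carries the invariant \<open>1 - d(Z,W)\<^sup>2\<close> of the ball to the Siegel pairing
  \<open>P = z + cnj z' - 2(w,w')\<close>, whose real part is \<open>t + t' + |w - w'|\<^sup>2\<close>. The step bound
  \<open>d(Z\<^sub>n, Z\<^sub>n\<^sub>+\<^sub>1) \<le> (\<alpha> - 1)/(\<alpha> + 1)\<close> therefore reads \<open>|P\<^sub>n|\<^sup>2 \<le> (\<alpha> + 1)\<^sup>2/\<alpha> t\<^sub>n t\<^sub>n\<^sub>+\<^sub>1\<close>,
  which forces \<open>t\<^sub>n/t\<^sub>n\<^sub>+\<^sub>1 \<le> \<alpha>\<close>. Schwarz--Pick together with the minimality of the multiplier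
  gives the reverse inequality asymptotically, so \<open>t\<^sub>n/t\<^sub>n\<^sub>+\<^sub>1 \<rightarrow> \<alpha>\<close>. At the ratio \<open>\<alpha>\<close> the
  bound is sharp, so the remaining terms \<open>(Im P\<^sub>n)\<^sup>2\<close> and \<open>t\<^sub>n\<^sub>+\<^sub>1|w\<^sub>n - w\<^sub>n\<^sub>+\<^sub>1|\<^sup>2\<close> of
  \<open>|P\<^sub>n|\<^sup>2\<close> are \<open>o(t\<^sub>n\<^sup>2)\<close>. As \<open>t\<^sub>n\<close> decays geometrically, summing increments gives
  \<open>Im z\<^sub>n = o(t\<^sub>n)\<close> and \<open>|w\<^sub>n|\<^sup>2 = o(t\<^sub>n)\<close>.
\<close>

section \<open>The Hermitian inner product\<close>

lemma cinner_add_left: "cinner (x + y) z = cinner x z + cinner y z"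
  by (simp add: cinner_def distrib_right sum.distrib)

lemma cinner_diff_left: "cinner (x - y) z = cinner x z - cinner y z"
  by (simp add: cinner_def left_diff_distrib sum_subtractf)

lemma cinner_add_right: "cinner z (x + y) = cinner z x + cinner z y"
  by (simp add: cinner_def distrib_left sum.distrib)

lemma cinner_diff_right: "cinner z (x - y) = cinner z x - cinner z y"
  by (simp add: cinner_def right_diff_distrib sum_subtractf)

lemma cinner_smult_left: "cinner (c *s x) y = c * cinner x y"
  by (simp add: cinner_def sum_distrib_left mult.assoc)

lemma cinner_smult_right: "cinner x (c *s y) = cnj c * cinner x y"
  by (simp add: cinner_def sum_distrib_left mult_ac)

lemma cinner_commute: "cinner y x = cnj (cinner x y)"
  by (simp add: cinner_def mult.commute)

lemma cinner_zero_left [simp]: "cinner 0 x = 0"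
  by (simp add: cinner_def)

lemma cinner_zero_right [simp]: "cinner x 0 = 0"
  by (simp add: cinner_def)

lemma cinner_axis: "cinner Z (axis i (1::complex)) = Z$i"
  by (simp add: cinner_def axis_def if_distrib cong: if_cong)

lemma norm_vec_power2: "(norm (x::complex^'n))\<^sup>2 = (\<Sum>i\<in>UNIV. (cmod (x$i))\<^sup>2)"
  by (simp add: norm_vec_def L2_set_def sum_nonneg)

lemma cinner_self: "cinner x x = complex_of_real ((norm x)\<^sup>2)"
proof -
  have "\<And>i. x$i * cnj (x$i) = complex_of_real ((cmod (x$i))\<^sup>2)"
    by (metis complex_norm_square)
  then show ?thesis by (simp add: cinner_def norm_vec_power2)
qed

lemma Re_cinner_self: "Re (cinner x x) = (norm x)\<^sup>2"
  by (simp only: cinner_self Re_complex_of_real)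

lemma norm_cinner_le: "cmod (cinner x y) \<le> norm x * norm y"
proof -
  have "cmod (cinner x y) \<le> (\<Sum>i\<in>UNIV. cmod (x$i * cnj (y$i)))"
    unfolding cinner_def by (rule norm_sum)
  also have "\<dots> = (\<Sum>i\<in>UNIV. \<bar>cmod (x$i)\<bar> * \<bar>cmod (y$i)\<bar>)"
    by (simp add: norm_mult)
  also have "\<dots> \<le> L2_set (\<lambda>i. cmod (x$i)) UNIV * L2_set (\<lambda>i. cmod (y$i)) UNIV"
    by (rule L2_set_mult_ineq)
  finally show ?thesis by (simp add: norm_vec_def)
qed

lemma norm_vector_smult: "norm (c *s (x::complex^'n)) = cmod c * norm x"
proof -
  have "(norm (c *s x))\<^sup>2 = (cmod c * norm x)\<^sup>2"
    by (simp add: norm_vec_power2 norm_mult power_mult_distrib sum_distrib_left)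
  then show ?thesis by simp
qed

lemma norm_add_power2_cinner:
  "(norm (x + y :: complex^'n))\<^sup>2 = (norm x)\<^sup>2 + (norm y)\<^sup>2 + 2 * Re (cinner x y)"
proof -
  have "complex_of_real ((norm (x + y))\<^sup>2) = cinner x x + cinner y y + (cinner x y + cnj (cinner x y))"
    by (simp only: cinner_self[symmetric] cinner_add_left cinner_add_right cinner_commute[of x y])
      (simp add: algebra_simps)
  then have "(norm (x + y))\<^sup>2 = Re (cinner x x + cinner y y + (cinner x y + cnj (cinner x y)))"
    by (metis Re_complex_of_real)
  then show ?thesis by (simp add: cinner_self)
qed

lemma norm_diff_power2_cinner:
  "(norm (x - y :: complex^'n))\<^sup>2 = (norm x)\<^sup>2 + (norm y)\<^sup>2 - 2 * Re (cinner x y)"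
  using norm_add_power2_cinner[of x "-y"] by (simp add: cinner_def sum_negf)

lemma norm_cinner_less_1: "norm x < 1 \<Longrightarrow> norm y < 1 \<Longrightarrow> cmod (cinner x y) < 1"
  using norm_cinner_le[of x y] norm_mult_less[of "norm x" 1 "norm y" 1] by simp

lemma one_minus_cinner_nonzero: "norm x < 1 \<Longrightarrow> norm y < 1 \<Longrightarrow> 1 - cinner x y \<noteq> 0"
  using norm_cinner_less_1[of x y] by auto

lemma one_plus_nonzero: "cmod (z::complex) < 1 \<Longrightarrow> 1 + z \<noteq> 0"
  by (metis add_eq_0_iff2 less_irrefl norm_minus_cancel norm_one)

lemma tendsto_cinner_right: "W \<longlonglongrightarrow> q \<Longrightarrow> (\<lambda>n. cinner Y (W n)) \<longlonglongrightarrow> cinner Y q"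
  unfolding cinner_def by (intro tendsto_intros tendsto_vec_nth)

lemma bounded_linear_cinner_left: "bounded_linear (\<lambda>x. cinner x v)"
  unfolding cinner_def
  by (intro bounded_linear_sum bounded_linear_compose[OF bounded_linear_mult_left] bounded_linear_vec_nth)

lemma bounded_linear_vector_smult_left: "bounded_linear (\<lambda>h::complex. h *s (w::complex^'n))"
proof (rule bounded_linear_intro[where K="norm w"])
  show "\<And>x y. (x + y) *s w = x *s w + y *s w" by (rule vector_sadd_rdistrib)
  show "\<And>r x. (r *\<^sub>R x) *s w = r *\<^sub>R (x *s w)" by (simp add: vec_eq_iff)
  show "\<And>x. norm (x *s w) \<le> norm x * norm w" by (simp add: norm_vector_smult)
qed

lemma cinner_axis_split:
  fixes Z W :: "complex^'n" and i :: 'n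
  defines "e \<equiv> axis i (1::complex)"
  shows "cinner Z W = Z$i * cnj (W$i) + cinner (Z - Z$i *s e) (W - W$i *s e)"
proof -
  have ee: "cinner e e = 1" by (simp add: e_def cinner_axis)
  have "cinner (X - X$i *s e) e = 0" for X :: "complex^'n"
    by (simp add: cinner_diff_left cinner_smult_left ee) (simp add: e_def cinner_axis)
  moreover from this have "cinner e (X - X$i *s e) = 0" for X :: "complex^'n"
    by (metis cinner_commute complex_cnj_zero)
  moreover have "cinner Z W = cinner ((Z - Z$i *s e) + Z$i *s e) ((W - W$i *s e) + W$i *s e)"
    by simp
  ultimately show ?thesis
    by (simp only: cinner_add_left cinner_add_right cinner_smult_left cinner_smult_right ee)
      (simp add: algebra_simps)
qed

lemma norm_axis_split:
  fixes Z :: "complex^'n"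
  shows "(norm Z)\<^sup>2 = (cmod (Z$i))\<^sup>2 + (norm (Z - Z$i *s axis i 1))\<^sup>2"
  using arg_cong[OF cinner_axis_split[of Z Z i], of Re]
  by (simp add: Re_cinner_self complex_norm_square[symmetric])

lemma norm_axis_one: "norm (axis i (1::complex)) = 1"
proof -
  have "(norm (axis i (1::complex)))\<^sup>2 = 1"
    using norm_axis_split[of "axis i (1::complex)" i] by simp
  then show ?thesis by (simp add: power2_eq_1_iff)
qed

lemma norm_coord_less_1: "Z \<in> unit_ball \<Longrightarrow> cmod (Z$i) < 1"
  using Finite_Cartesian_Product.norm_nth_le[of Z i] by (simp add: unit_ball_def)

lemma abs_Im_cinner_le: "\<bar>Im (cinner w w')\<bar> \<le> norm w * norm (w - w')"
proof -
  have "Im (cinner w w') = - Im (cinner w (w - w'))"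
    by (simp add: cinner_diff_right cinner_self)
  then have "\<bar>Im (cinner w w')\<bar> \<le> cmod (cinner w (w - w'))" by (simp add: abs_Im_le_cmod)
  also have "\<dots> \<le> norm w * norm (w - w')" by (rule norm_cinner_le)
  finally show ?thesis .
qed

section \<open>Schwarz--Pick lemma for the ball\<close>

definition pick_ratio :: "complex^'n \<Rightarrow> complex^'n \<Rightarrow> real" where
  "pick_ratio Z W = (1 - (norm Z)\<^sup>2) * (1 - (norm W)\<^sup>2) / (cmod (1 - cinner Z W))\<^sup>2"

lemma dB_eq_pick_ratio: "dB Z W = sqrt (1 - pick_ratio Z W)"
  by (simp add: dB_def pick_ratio_def)

lemma pick_ratio_pos: "norm Z < 1 \<Longrightarrow> norm W < 1 \<Longrightarrow> pick_ratio Z W > 0"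
  using one_minus_cinner_nonzero[of Z W] by (simp add: pick_ratio_def abs_square_less_1)

lemma pick_ratio_self: "norm Z < 1 \<Longrightarrow> pick_ratio Z Z = 1"
proof -
  assume "norm Z < 1"
  then have Z: "(norm Z)\<^sup>2 < 1" by (simp add: abs_square_less_1)
  have "1 - cinner Z Z = complex_of_real (1 - (norm Z)\<^sup>2)" by (simp add: cinner_self)
  then have "cmod (1 - cinner Z Z) = 1 - (norm Z)\<^sup>2"
    by (simp only: norm_of_real) (use Z in simp)
  then show ?thesis using Z by (simp add: pick_ratio_def power2_eq_square)
qed

definition proj_coeff :: "complex^'n \<Rightarrow> complex^'n \<Rightarrow> complex" where
  "proj_coeff b x = cinner x b / cinner b b"

text \<open>Rudin's involution \<open>\<phi>\<^sub>b(x) = (b - P\<^sub>b x - s\<^sub>b Q\<^sub>b x) / (1 - (x,b))\<close> of the ball exchanging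
  \<open>b\<close> and \<open>0\<close>, where \<open>P\<^sub>b x = proj_coeff b x *s b\<close>, \<open>Q\<^sub>b = I - P\<^sub>b\<close> and \<open>s\<^sub>b = (1 - |b|\<^sup>2)\<^sup>1\<^sup>/\<^sup>2\<close>.\<close>
definition ball_involution :: "complex^'n \<Rightarrow> complex^'n \<Rightarrow> complex^'n" where
  "ball_involution b x = (1 / (1 - cinner x b)) *s
     ((1 - proj_coeff b x) *s b - complex_of_real (sqrt (1 - (norm b)\<^sup>2)) *s (x - proj_coeff b x *s b))"

lemma cinner_ball_involution_left:
  "cinner (ball_involution b x) y =
     ((1 - proj_coeff b x) * cinner b y
      - complex_of_real (sqrt (1 - (norm b)\<^sup>2)) * (cinner x y - proj_coeff b x * cinner b y))
     / (1 - cinner x b)"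
  unfolding ball_involution_def cinner_smult_left cinner_diff_left by simp

lemma ball_involution_self: "ball_involution b b = 0"
  by (cases "b = 0") (auto simp: ball_involution_def proj_coeff_def cinner_self)

lemma cinner_eq_proj_coeff: "cinner x b = proj_coeff b x * complex_of_real ((norm b)\<^sup>2)"
  by (cases "b = 0") (auto simp: proj_coeff_def cinner_self)

lemma one_minus_norm_ball_involution:
  assumes b: "norm b < 1" and x: "norm x < 1"
  shows "1 - (norm (ball_involution b x))\<^sup>2 = pick_ratio x b"
proof -
  define al where "al = proj_coeff b x"
  define \<beta> where "\<beta> = (norm b)\<^sup>2"
  define p where "p = x - al *s b"
  define s where "s = complex_of_real (sqrt (1 - (norm b)\<^sup>2))"
  have b1: "\<beta> < 1" using b by (simp add: \<beta>_def abs_square_less_1)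
  have ss: "(cmod s)\<^sup>2 = 1 - \<beta>" using b1 by (simp add: s_def \<beta>_def)
  have xb: "cinner x b = al * complex_of_real \<beta>" by (simp add: al_def \<beta>_def cinner_eq_proj_coeff)
  have pb: "cinner p b = 0"
    by (simp add: p_def cinner_diff_left cinner_smult_left xb cinner_self \<beta>_def)
  have bp: "cinner b p = 0" using pb cinner_commute[of p b] by simp
  have pn: "(norm p)\<^sup>2 = (norm x)\<^sup>2 - (cmod al)\<^sup>2 * \<beta>"
  proof -
    have e1: "(norm p)\<^sup>2 = (norm x)\<^sup>2 + (cmod al)\<^sup>2 * \<beta> - 2 * Re (cinner x (al *s b))"
      by (simp add: p_def norm_diff_power2_cinner norm_vector_smult power_mult_distrib \<beta>_def)
    have aa: "cnj al * al = complex_of_real ((cmod al)\<^sup>2)" by (metis complex_norm_square mult.commute)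
    have e2: "cinner x (al *s b) = complex_of_real ((cmod al)\<^sup>2 * \<beta>)"
      by (simp add: cinner_smult_right xb aa mult.assoc[symmetric])
    show ?thesis using e1 e2 by simp
  qed
  have Nn: "(norm ((1 - al) *s b - s *s p))\<^sup>2
      = (cmod (1 - al))\<^sup>2 * \<beta> + (1 - \<beta>) * ((norm x)\<^sup>2 - (cmod al)\<^sup>2 * \<beta>)"
  proof -
    have c0: "cinner ((1 - al) *s b) (s *s p) = 0"
      by (simp only: cinner_smult_left cinner_smult_right bp) simp
    have "(norm ((1 - al) *s b - s *s p))\<^sup>2 = (norm ((1 - al) *s b))\<^sup>2 + (norm (s *s p))\<^sup>2"
      using norm_diff_power2_cinner[of "(1 - al) *s b" "s *s p"] c0 by simp
    also have "\<dots> = (cmod (1 - al))\<^sup>2 * \<beta> + (cmod s)\<^sup>2 * (norm p)\<^sup>2"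
      by (simp only: norm_vector_smult power_mult_distrib \<beta>_def)
    finally show ?thesis by (simp add: ss pn)
  qed
  have numerator: "(norm ((1 - al) *s b - s *s p))\<^sup>2
      = (cmod (1 - cinner x b))\<^sup>2 - (1 - \<beta>) * (1 - (norm x)\<^sup>2)"
  proof -
    have "(cmod (1 - al * complex_of_real \<beta>))\<^sup>2
        - ((cmod (1 - al))\<^sup>2 * \<beta> + (1 - \<beta>) * ((norm x)\<^sup>2 - (cmod al)\<^sup>2 * \<beta>))
        = (1 - \<beta>) * (1 - (norm x)\<^sup>2)"
      by (simp only: cmod_power2) (simp add: algebra_simps power2_eq_square)
    then show ?thesis using Nn xb by simp
  qed
  have D: "1 - cinner x b \<noteq> 0" using one_minus_cinner_nonzero[OF x b] .
  have "(norm (ball_involution b x))\<^sup>2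
      = (norm ((1 - al) *s b - s *s p))\<^sup>2 / (cmod (1 - cinner x b))\<^sup>2"
    by (simp only: ball_involution_def al_def[symmetric] s_def[symmetric] p_def[symmetric]
        norm_vector_smult) (simp add: power_mult_distrib norm_divide power_divide)
  also have "\<dots> = ((cmod (1 - cinner x b))\<^sup>2 - (1 - \<beta>) * (1 - (norm x)\<^sup>2)) / (cmod (1 - cinner x b))\<^sup>2"
    by (simp only: numerator)
  finally show ?thesis using D by (simp add: pick_ratio_def \<beta>_def field_simps)
qed

lemma norm_ball_involution_less_1: "norm b < 1 \<Longrightarrow> norm x < 1 \<Longrightarrow> norm (ball_involution b x) < 1"
proof -
  assume "norm b < 1" "norm x < 1"
  then have "(norm (ball_involution b x))\<^sup>2 < 1"
    using one_minus_norm_ball_involution[of b x] pick_ratio_pos[of x b] by simp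
  then show ?thesis by (simp add: abs_square_less_1)
qed

lemma one_minus_norm_Moebius_function:
  assumes "norm w < 1" "norm z < 1"
  shows "1 - (norm (Moebius_function 0 w z))\<^sup>2 = (1 - (cmod z)\<^sup>2) * (1 - (cmod w)\<^sup>2) / (cmod (1 - cnj w * z))\<^sup>2"
proof -
  have "(cmod (1 - cnj w * z))\<^sup>2 - (cmod (z - w))\<^sup>2 = (1 - (cmod w)\<^sup>2) * (1 - (cmod z)\<^sup>2)"
    by (simp only: cmod_power2) (simp add: algebra_simps power2_eq_square)
  moreover have "1 - cnj w * z \<noteq> 0"
    using norm_mult_less[of "cnj w" 1 z 1] assms by auto
  ultimately show ?thesis
    by (simp add: Moebius_function_simple norm_divide field_simps)
qed

text \<open>Schwarz's lemma applied to \<open>\<nu> \<mapsto> (\<phi>\<^sub>b(H(M(\<nu>))), y) / |y|\<close> where \<open>M\<close> is the disc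
  automorphism with \<open>M 0 = m\<close>, \<open>b = H m\<close> and \<open>y = \<phi>\<^sub>b(H l)\<close>.\<close>
lemma norm_ball_involution_le_Moebius:
  fixes H :: "complex \<Rightarrow> complex^'n"
  assumes hol: "\<And>v. (\<lambda>z. cinner (H z) v) holomorphic_on ball 0 1"
    and inb: "\<And>z. norm z < 1 \<Longrightarrow> norm (H z) < 1"
    and l: "norm l < 1" and m: "norm m < 1"
  shows "norm (ball_involution (H m) (H l)) \<le> norm (Moebius_function 0 m l)"
proof -
  define b where "b = H m"
  define y where "y = ball_involution b (H l)"
  define \<nu>0 where "\<nu>0 = Moebius_function 0 m l"
  define M where "M = Moebius_function 0 (-m)"
  have bin: "norm b < 1" using inb m by (simp add: b_def)
  have Mnu0: "M \<nu>0 = l" using Moebius_function_compose[of "-m" m l] m l by (simp add: M_def \<nu>0_def)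
  have M0: "M 0 = m" by (simp add: M_def Moebius_function_of_zero)
  have Min: "\<And>\<nu>. norm \<nu> < 1 \<Longrightarrow> norm (M \<nu>) < 1"
    using m by (simp add: M_def Moebius_function_norm_lt_1)
  have Mhol: "M holomorphic_on ball 0 1" using m by (simp add: M_def Moebius_function_holomorphic)
  have nu0in: "norm \<nu>0 < 1" using l m by (simp add: \<nu>0_def Moebius_function_norm_lt_1)
  have "M ` ball 0 1 \<subseteq> ball 0 1" using Min by auto
  then have HMhol: "\<And>v. (\<lambda>\<nu>. cinner (H (M \<nu>)) v) holomorphic_on ball 0 1"
    using holomorphic_on_compose_gen[OF Mhol hol] by (simp add: o_def)
  show ?thesis
  proof (cases "y = 0")
    case True then show ?thesis by (simp add: y_def b_def)
  next
    case False
    define g where "g = (\<lambda>\<nu>. cinner (ball_involution b (H (M \<nu>))) y / complex_of_real (norm y))"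
    have den: "\<And>\<nu>. \<nu> \<in> ball 0 1 \<Longrightarrow> 1 - cinner (H (M \<nu>)) b \<noteq> 0"
      using one_minus_cinner_nonzero inb Min bin by auto
    have "g holomorphic_on ball 0 1"
      unfolding g_def cinner_ball_involution_left proj_coeff_def divide_inverse
      by (intro holomorphic_intros HMhol) (use den False in auto)
    moreover have "g 0 = 0" by (simp add: g_def M0 b_def[symmetric] ball_involution_self)
    moreover have "norm (g z) < 1" if "norm z < 1" for z
    proof -
      have "cmod (cinner (ball_involution b (H (M z))) y) \<le> norm (ball_involution b (H (M z))) * norm y"
        by (rule norm_cinner_le)
      also have "\<dots> < norm y"
        using norm_ball_involution_less_1[OF bin inb[OF Min[OF that]]] False by simp
      finally show ?thesis using False by (simp add: g_def norm_divide divide_less_eq)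
    qed
    ultimately have "norm (g \<nu>0) \<le> norm \<nu>0" by (rule Schwarz_Lemma(1)[OF _ _ _ nu0in])
    moreover have "g \<nu>0 = complex_of_real (norm y)"
      using False by (simp add: g_def Mnu0 y_def cinner_self power2_eq_square)
    ultimately show ?thesis by (simp add: y_def b_def \<nu>0_def)
  qed
qed

lemma schwarz_pick_disc_to_ball:
  fixes H :: "complex \<Rightarrow> complex^'n"
  assumes hol: "\<And>v. (\<lambda>z. cinner (H z) v) holomorphic_on ball 0 1"
    and inb: "\<And>z. norm z < 1 \<Longrightarrow> norm (H z) < 1"
    and l: "norm l < 1" and m: "norm m < 1"
  shows "(1 - (cmod l)\<^sup>2) * (1 - (cmod m)\<^sup>2) / (cmod (1 - cnj m * l))\<^sup>2 \<le> pick_ratio (H l) (H m)"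
proof -
  have "(norm (ball_involution (H m) (H l)))\<^sup>2 \<le> (norm (Moebius_function 0 m l))\<^sup>2"
    using norm_ball_involution_le_Moebius[OF hol inb l m] by (simp add: power_mono)
  then show ?thesis
    using one_minus_norm_Moebius_function[OF m l] one_minus_norm_ball_involution[OF inb[OF m] inb[OF l]]
    by linarith
qed

lemma holomorphic_on_cinner_line:
  assumes F: "holo_on unit_ball F" and S: "open S"
    and inb: "\<And>l. l \<in> S \<Longrightarrow> c + l *s w \<in> unit_ball"
  shows "(\<lambda>l. cinner (F (c + l *s w)) v) holomorphic_on S"
proof -
  have "\<exists>f'. ((\<lambda>l. cinner (F (c + l *s w)) v) has_field_derivative f') (at l)" if l: "l \<in> S" for l
  proof -
    obtain L where L: "(F has_derivative L) (at (c + l *s w))" and hom: "\<And>c z. L (c *s z) = c *s L z"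
      using F inb[OF l] unfolding holo_on_def by blast
    have "((\<lambda>l. c + l *s w) has_derivative (\<lambda>h. h *s w)) (at l)"
      using has_derivative_add[OF has_derivative_const
          bounded_linear_imp_has_derivative[OF bounded_linear_vector_smult_left]]
      by simp
    from diff_chain_at[OF diff_chain_at[OF this L]
        bounded_linear_imp_has_derivative[OF bounded_linear_cinner_left]]
    have "((\<lambda>l. cinner (F (c + l *s w)) v) has_derivative (\<lambda>h. cinner (L w) v * h)) (at l)"
      by (simp add: o_def hom cinner_smult_left mult.commute)
    then show ?thesis unfolding has_field_derivative_def by blast
  qed
  then show ?thesis using S by (simp add: holomorphic_on_open)
qed

lemma ball_complex_line:
  assumes Z: "Z \<in> unit_ball" and W: "W \<in> unit_ball" and ZW: "Z \<noteq> W"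
  obtains c w lZ lW where "\<And>l. c + l *s w \<in> unit_ball \<longleftrightarrow> norm l < 1"
    and "\<And>l m. pick_ratio (c + l *s w) (c + m *s w)
                 = (1 - (cmod l)\<^sup>2) * (1 - (cmod m)\<^sup>2) / (cmod (1 - cnj m * l))\<^sup>2"
    and "c + lZ *s w = Z" and "c + lW *s w = W"
proof -
  define d where "d = Z - W"
  define nd where "nd = norm d"
  have nd0: "nd > 0" using ZW by (simp add: nd_def d_def)
  define u where "u = complex_of_real (1/nd) *s d"
  have uu: "cinner u u = 1"
  proof -
    have "cinner u u = (complex_of_real (1/nd) * cnj (complex_of_real (1/nd))) * cinner d d"
      by (simp only: u_def cinner_smult_left cinner_smult_right mult_ac)
    also have "cinner d d = complex_of_real (nd\<^sup>2)" by (simp add: cinner_self nd_def)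
    finally show ?thesis using nd0 by (simp add: power2_eq_square)
  qed
  have nu: "(norm u)\<^sup>2 = 1" using Re_cinner_self[of u] by (simp add: uu)
  have dnu: "d = complex_of_real nd *s u"
    using nd0 by (simp add: u_def)
  define cW where "cW = cinner W u"
  define c where "c = W - cW *s u"
  have cu: "cinner c u = 0" by (simp add: c_def cinner_diff_left cinner_smult_left uu cW_def)
  have uc: "cinner u c = 0" using cu cinner_commute[of c u] by simp
  have Wc: "W = c + cW *s u" by (simp add: c_def)
  have nW: "(norm W)\<^sup>2 = (norm c)\<^sup>2 + (cmod cW)\<^sup>2"
    using norm_add_power2_cinner[of c "cW *s u"]
    by (simp add: Wc[symmetric] norm_vector_smult power_mult_distrib nu cinner_smult_right cu)
  have "(norm W)\<^sup>2 < 1" using W by (simp add: unit_ball_def abs_square_less_1)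
  then have c1: "(norm c)\<^sup>2 < 1" using nW by (smt (verit) zero_le_power2)
  define r where "r = sqrt (1 - (norm c)\<^sup>2)"
  have r0: "r > 0" using c1 by (simp add: r_def)
  have r2: "r\<^sup>2 = 1 - (norm c)\<^sup>2" using c1 by (simp add: r_def)
  define w where "w = complex_of_real r *s u"
  have ipsi: "cinner (c + l *s w) (c + m *s w) = complex_of_real ((norm c)\<^sup>2) + complex_of_real (r\<^sup>2) * (l * cnj m)"
    for l m
  proof -
    have "cinner (c + l *s w) (c + m *s w) = cinner c c + cnj (complex_of_real r * m) * cinner c u
        + (complex_of_real r * l) * cinner u c
        + (complex_of_real r * l) * (cnj (complex_of_real r * m) * cinner u u)"
      by (simp only: w_def vector_smult_assoc cinner_add_left cinner_add_right cinner_smult_left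
          cinner_smult_right) (simp add: algebra_simps)
    then show ?thesis by (simp add: cu uc uu cinner_self[of c] power2_eq_square)
  qed
  have one_minus_npsi: "1 - (norm (c + l *s w))\<^sup>2 = r\<^sup>2 * (1 - (cmod l)\<^sup>2)" for l
  proof -
    have ll: "l * cnj l = complex_of_real ((cmod l)\<^sup>2)" by (rule complex_norm_square[symmetric])
    have "(norm (c + l *s w))\<^sup>2 = Re (cinner (c + l *s w) (c + l *s w))" by (simp only: Re_cinner_self)
    also have "\<dots> = (norm c)\<^sup>2 + r\<^sup>2 * (cmod l)\<^sup>2"
      by (simp only: ipsi ll of_real_mult[symmetric] of_real_add[symmetric] Re_complex_of_real)
    finally show ?thesis using r2 by (simp only: right_diff_distrib mult_1_right)
  qed
  have psi_in: "c + l *s w \<in> unit_ball \<longleftrightarrow> norm l < 1" for l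
  proof -
    have "c + l *s w \<in> unit_ball \<longleftrightarrow> 0 < 1 - (norm (c + l *s w))\<^sup>2"
      by (simp add: unit_ball_def abs_square_less_1)
    also have "\<dots> \<longleftrightarrow> norm l < 1"
      using r0 by (simp add: one_minus_npsi zero_less_mult_iff abs_square_less_1)
    finally show ?thesis .
  qed
  have Qpsi: "pick_ratio (c + l *s w) (c + m *s w)
      = (1 - (cmod l)\<^sup>2) * (1 - (cmod m)\<^sup>2) / (cmod (1 - cnj m * l))\<^sup>2" for l m
  proof -
    have "1 - cinner (c + l *s w) (c + m *s w) = complex_of_real (r\<^sup>2) * (1 - cnj m * l)"
      by (simp only: ipsi r2) (simp add: algebra_simps)
    then have "cmod (1 - cinner (c + l *s w) (c + m *s w)) = r\<^sup>2 * cmod (1 - cnj m * l)"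
      by (simp only: norm_mult norm_of_real abs_power2)
    then have "pick_ratio (c + l *s w) (c + m *s w)
        = (r\<^sup>2 * (1 - (cmod l)\<^sup>2)) * (r\<^sup>2 * (1 - (cmod m)\<^sup>2)) / ((r\<^sup>2)\<^sup>2 * (cmod (1 - cnj m * l))\<^sup>2)"
      by (simp only: pick_ratio_def one_minus_npsi power_mult_distrib)
    also have "\<dots> = (r\<^sup>2)\<^sup>2 * ((1 - (cmod l)\<^sup>2) * (1 - (cmod m)\<^sup>2)) / ((r\<^sup>2)\<^sup>2 * (cmod (1 - cnj m * l))\<^sup>2)"
      by algebra
    finally show ?thesis using r0 by simp
  qed
  have psiW: "c + (cW / complex_of_real r) *s w = W" using r0 by (simp add: w_def Wc)
  have "Z = W + d" by (simp add: d_def)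
  then have "cinner Z u = cW + complex_of_real nd"
    by (simp add: cW_def cinner_add_left dnu cinner_smult_left uu)
  then have psiZ: "c + (cinner Z u / complex_of_real r) *s w = Z"
    using r0 by (simp add: w_def c_def dnu[symmetric] d_def)
  show ?thesis using that[OF psi_in Qpsi psiZ psiW] .
qed

lemma schwarz_pick_ball:
  assumes f: "analytic_selfmap_ball F" and Z: "Z \<in> unit_ball" and W: "W \<in> unit_ball"
  shows "pick_ratio Z W \<le> pick_ratio (F Z) (F W)"
proof (cases "Z = W")
  case True
  have "F Z \<in> unit_ball" using f Z by (auto simp: analytic_selfmap_ball_def)
  then show ?thesis using True Z by (simp add: pick_ratio_self unit_ball_def)
next
  case False
  obtain c w lZ lW where line: "\<And>l. c + l *s w \<in> unit_ball \<longleftrightarrow> norm l < 1"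
    and Q: "\<And>l m. pick_ratio (c + l *s w) (c + m *s w)
                 = (1 - (cmod l)\<^sup>2) * (1 - (cmod m)\<^sup>2) / (cmod (1 - cnj m * l))\<^sup>2"
    and lZ: "c + lZ *s w = Z" and lW: "c + lW *s w = W"
    using ball_complex_line[OF Z W False] by blast
  have "(\<lambda>l. cinner (F (c + l *s w)) v) holomorphic_on ball 0 1" for v
    using f line by (intro holomorphic_on_cinner_line) (auto simp: analytic_selfmap_ball_def)
  moreover have "norm (F (c + l *s w)) < 1" if "norm l < 1" for l
    using f line[of l] that by (auto simp: analytic_selfmap_ball_def unit_ball_def)
  moreover have "norm lZ < 1" "norm lW < 1" using line lZ lW Z W by auto
  ultimately have "pick_ratio (c + lZ *s w) (c + lW *s w) \<le> pick_ratio (F (c + lZ *s w)) (F (c + lW *s w))"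
    unfolding Q by (rule schwarz_pick_disc_to_ball)
  then show ?thesis by (simp add: lZ lW)
qed

lemma schwarz_pick_horo:
  assumes f: "analytic_selfmap_ball F" and X: "X \<in> unit_ball" and W: "W \<in> unit_ball"
  shows "(cmod (1 - cinner (F X) (F W)))\<^sup>2 / (1 - (norm (F X))\<^sup>2)
    \<le> (1 - (norm (F W))\<^sup>2) / (1 - (norm W)\<^sup>2) * ((cmod (1 - cinner X W))\<^sup>2 / (1 - (norm X)\<^sup>2))"
proof -
  have FX: "F X \<in> unit_ball" and FW: "F W \<in> unit_ball"
    using f X W by (auto simp: analytic_selfmap_ball_def)
  have pos: "0 < 1 - (norm V)\<^sup>2" if "V \<in> unit_ball" for V :: "complex^'n"
    using that by (simp add: unit_ball_def abs_square_less_1)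
  have Epos: "0 < (cmod (1 - cinner V V'))\<^sup>2" if "V \<in> unit_ball" "V' \<in> unit_ball" for V V' :: "complex^'n"
    using that one_minus_cinner_nonzero[of V V'] by (simp add: unit_ball_def)
  define PX PW PFX PFW where "PX = 1 - (norm X)\<^sup>2" and "PW = 1 - (norm W)\<^sup>2"
    and "PFX = 1 - (norm (F X))\<^sup>2" and "PFW = 1 - (norm (F W))\<^sup>2"
  define E EF where "E = (cmod (1 - cinner X W))\<^sup>2" and "EF = (cmod (1 - cinner (F X) (F W)))\<^sup>2"
  have "PX * PW / E \<le> PFX * PFW / EF"
    using schwarz_pick_ball[OF f X W] by (simp add: pick_ratio_def PX_def PW_def PFX_def PFW_def E_def EF_def)
  then have "PX * PW * EF \<le> PFX * PFW * E"
    using Epos[OF X W] Epos[OF FX FW] by (simp add: E_def EF_def field_simps)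
  moreover have "0 < PX" "0 < PW" "0 < PFX"
    using pos[OF X] pos[OF W] pos[OF FX] by (simp_all add: PX_def PW_def PFX_def)
  ultimately have "EF / PFX \<le> PFW / PW * (E / PX)"
    by (simp add: divide_simps mult_ac)
  then show ?thesis by (simp add: PX_def PW_def PFX_def PFW_def E_def EF_def)
qed

text \<open>Schwarz--Pick for \<open>f(Z\<^sub>n\<^sub>+\<^sub>1) = Z\<^sub>n\<close> compares the horosphere quotients of \<open>f(X)\<close> at \<open>Z\<^sub>n\<close> and
  of \<open>X\<close> at \<open>Z\<^sub>n\<^sub>+\<^sub>1\<close> up to the depth ratio; pass to the limit along the indices where that
  ratio is below \<open>c\<close>.\<close>
lemma image_horo_subset_of_frequent_depth_ratio:
  assumes f: "analytic_selfmap_ball f"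
    and Zin: "\<And>n. Z n \<in> unit_ball" and bwd: "\<And>n. f (Z (Suc n)) = Z n" and conv: "Z \<longlonglongrightarrow> q"
    and c0: "0 < c"
    and fr: "frequently (\<lambda>n. 1 - (norm (Z n))\<^sup>2 < c * (1 - (norm (Z (Suc n)))\<^sup>2)) sequentially"
  shows "f ` horo q R \<subseteq> horo q (c * R)"
proof
  define s where "s = (\<lambda>n. 1 - (norm (Z n))\<^sup>2)"
  have spos: "\<And>n. s n > 0" using Zin by (simp add: s_def unit_ball_def abs_square_less_1)
  fix Y assume "Y \<in> f ` horo q R"
  then obtain X where X: "X \<in> horo q R" and Y: "Y = f X" by blast
  have Xb: "X \<in> unit_ball" and hX: "(cmod (1 - cinner X q))\<^sup>2 / (1 - (norm X)\<^sup>2) < R"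
    using X by (auto simp: horo_def)
  then have PX: "0 < 1 - (norm X)\<^sup>2" by (simp add: unit_ball_def abs_square_less_1)
  have Yb: "Y \<in> unit_ball" using f Xb Y by (auto simp: analytic_selfmap_ball_def)
  then have PY: "0 < 1 - (norm Y)\<^sup>2" by (simp add: unit_ball_def abs_square_less_1)
  define A where "A = (\<lambda>n. (cmod (1 - cinner Y (Z n)))\<^sup>2 / (1 - (norm Y)\<^sup>2))"
  define B where "B = (\<lambda>n. (cmod (1 - cinner X (Z (Suc n))))\<^sup>2 / (1 - (norm X)\<^sup>2))"
  have "A \<longlonglongrightarrow> (cmod (1 - cinner Y q))\<^sup>2 / (1 - (norm Y)\<^sup>2)"
    unfolding A_def by (intro tendsto_intros tendsto_cinner_right conv) (use PY in simp)
  moreover have "B \<longlonglongrightarrow> (cmod (1 - cinner X q))\<^sup>2 / (1 - (norm X)\<^sup>2)"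
    unfolding B_def by (intro tendsto_intros tendsto_cinner_right LIMSEQ_Suc conv) (use PX in simp)
  ultimately have lim: "(\<lambda>n. A n - c * B n) \<longlonglongrightarrow>
      (cmod (1 - cinner Y q))\<^sup>2 / (1 - (norm Y)\<^sup>2) - c * ((cmod (1 - cinner X q))\<^sup>2 / (1 - (norm X)\<^sup>2))"
    by (intro tendsto_intros)
  have key: "A n \<le> c * B n" if sn: "s n < c * s (Suc n)" for n
  proof -
    have "A n \<le> s n / s (Suc n) * B n"
      using schwarz_pick_horo[OF f Xb Zin[of "Suc n"]] by (simp add: A_def B_def s_def Y bwd)
    also have "\<dots> \<le> c * B n"
      using sn spos[of "Suc n"] PX by (intro mult_right_mono) (auto simp: B_def divide_le_eq)
    finally show ?thesis .
  qed
  show "Y \<in> horo q (c * R)"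
  proof (rule ccontr)
    assume "Y \<notin> horo q (c * R)"
    then have "c * R \<le> (cmod (1 - cinner Y q))\<^sup>2 / (1 - (norm Y)\<^sup>2)"
      using Yb by (auto simp: horo_def not_less)
    moreover have "c * ((cmod (1 - cinner X q))\<^sup>2 / (1 - (norm X)\<^sup>2)) < c * R"
      by (rule mult_strict_left_mono[OF hX c0])
    ultimately have "eventually (\<lambda>n. A n - c * B n > 0) sequentially"
      by (intro order_tendstoD(1)[OF lim]) simp
    then have "eventually (\<lambda>n. \<not> s n < c * s (Suc n)) sequentially"
      by eventually_elim (use key in force)
    then show False using fr by (simp add: frequently_def s_def)
  qed
qed

lemma backward_orbit_depth_ratio:
  assumes f: "analytic_selfmap_ball f" and rep: "boundary_repelling_fp f q \<alpha>"
    and Zin: "\<And>n. Z n \<in> unit_ball" and bwd: "\<And>n. f (Z (Suc n)) = Z n" and conv: "Z \<longlonglongrightarrow> q"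
    and c: "c < \<alpha>"
  shows "eventually (\<lambda>n. c * (1 - (norm (Z (Suc n)))\<^sup>2) \<le> 1 - (norm (Z n))\<^sup>2) sequentially"
proof (rule ccontr)
  assume "\<not> ?thesis"
  then have fr: "frequently (\<lambda>n. 1 - (norm (Z n))\<^sup>2 < c * (1 - (norm (Z (Suc n)))\<^sup>2)) sequentially"
    unfolding frequently_def by (simp add: not_less)
  then obtain n where "1 - (norm (Z n))\<^sup>2 < c * (1 - (norm (Z (Suc n)))\<^sup>2)" by (meson frequently_ex)
  moreover have "0 < 1 - (norm (Z n))\<^sup>2" "0 < 1 - (norm (Z (Suc n)))\<^sup>2"
    using Zin by (simp_all add: unit_ball_def abs_square_less_1)
  ultimately have c0: "0 < c" by (smt (verit) mult_nonpos_nonneg)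
  have "\<forall>R>0. f ` horo q R \<subseteq> horo q (c * R)"
    using image_horo_subset_of_frequent_depth_ratio[OF f Zin bwd conv c0 fr] by blast
  then have "\<alpha> \<le> c" using rep unfolding boundary_repelling_fp_def by blast
  then show False using c by simp
qed

section \<open>Estimates for real sequences\<close>

lemma le_of_quadratic_ratio_bound:
  fixes \<rho> \<alpha> :: real
  assumes "0 < \<rho>" "1 < \<alpha>" "(\<rho> + 1)\<^sup>2 \<le> (\<alpha> + 1)\<^sup>2 / \<alpha> * \<rho>"
  shows "\<rho> \<le> \<alpha>"
proof (rule ccontr)
  assume "\<not> \<rho> \<le> \<alpha>"
  then have "\<alpha> * \<alpha> < \<alpha> * \<rho>" using assms by simp
  moreover have "1 < \<alpha> * \<alpha>" using assms by (metis less_1_mult)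
  ultimately have "0 < (\<alpha> * \<rho> - 1) * (\<rho> - \<alpha>)"
    using \<open>\<not> \<rho> \<le> \<alpha>\<close> by (intro mult_pos_pos) auto
  moreover have "(\<alpha> * \<rho> - 1) * (\<rho> - \<alpha>) = \<alpha> * (\<rho> + 1)\<^sup>2 - (\<alpha> + 1)\<^sup>2 * \<rho>"
    by (simp add: power2_eq_square algebra_simps)
  moreover have "\<alpha> * (\<rho> + 1)\<^sup>2 \<le> (\<alpha> + 1)\<^sup>2 * \<rho>"
    using assms by (simp add: field_simps)
  ultimately show False by simp
qed

lemma tendsto_zero_of_power2:
  fixes f :: "nat \<Rightarrow> real"
  assumes "(\<lambda>n. (f n)\<^sup>2) \<longlonglongrightarrow> 0"
  shows "f \<longlonglongrightarrow> 0"
proof -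
  have "(\<lambda>n. sqrt ((f n)\<^sup>2)) \<longlonglongrightarrow> sqrt 0" using assms by (intro tendsto_intros)
  then show ?thesis by (simp add: tendsto_rabs_zero_iff)
qed

lemma telescoping_geometric_bound:
  fixes x :: "nat \<Rightarrow> 'a::real_normed_vector" and T :: "nat \<Rightarrow> real"
  assumes step: "\<And>k. k \<ge> N \<Longrightarrow> T (Suc k) \<le> r * T k \<and> norm (x k - x (Suc k)) \<le> \<eta> * T k"
    and r: "0 \<le> r" and \<eta>: "0 \<le> \<eta>" and n: "n \<ge> N"
  shows "norm (x n - x (n + m)) \<le> \<eta> * T n * (\<Sum>j<m. r ^ j) \<and> T (n + m) \<le> r ^ m * T n"
proof (induction m)
  case 0 then show ?case by simp
next
  case (Suc m)
  have k: "n + m \<ge> N" using n by simp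
  have "norm (x n - x (n + Suc m)) \<le> norm (x n - x (n + m)) + norm (x (n + m) - x (Suc (n + m)))"
    by (metis add_Suc_right dist_norm dist_triangle)
  also have "\<dots> \<le> \<eta> * T n * (\<Sum>j<m. r ^ j) + \<eta> * T (n + m)"
    using Suc.IH step[OF k] by linarith
  also have "\<eta> * T (n + m) \<le> \<eta> * (r ^ m * T n)"
    using Suc.IH \<eta> by (simp add: mult_left_mono)
  finally have "norm (x n - x (n + Suc m)) \<le> \<eta> * T n * (\<Sum>j<Suc m. r ^ j)"
    by (simp add: algebra_simps)
  moreover have "T (n + Suc m) \<le> r * T (n + m)" using step[OF k] by simp
  moreover have "\<dots> \<le> r * (r ^ m * T n)" using Suc.IH r by (simp add: mult_left_mono)
  ultimately show ?case by simp
qed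

text \<open>Write \<open>x\<^sub>n\<close> as the tail sum of its increments and compare with a geometric series.\<close>
lemma tendsto_zero_relative_of_increments:
  fixes x :: "nat \<Rightarrow> 'a::real_normed_vector" and T :: "nat \<Rightarrow> real"
  assumes x0: "x \<longlonglongrightarrow> 0" and Tpos: "\<And>n. T n > 0"
    and Tr: "eventually (\<lambda>n. T (Suc n) \<le> r * T n) sequentially"
    and r0: "0 \<le> r" and r1: "r < 1"
    and dx: "(\<lambda>n. norm (x n - x (Suc n)) / T n) \<longlonglongrightarrow> 0"
  shows "(\<lambda>n. norm (x n) / T n) \<longlonglongrightarrow> 0"
proof (rule tendstoI)
  fix e :: real assume e: "e > 0"
  define \<eta> where "\<eta> = e * (1 - r) / 2"
  have \<eta>: "\<eta> > 0" using e r1 by (simp add: \<eta>_def)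
  have "eventually (\<lambda>n. norm (x n - x (Suc n)) \<le> \<eta> * T n) sequentially"
    using tendstoD[OF dx \<eta>]
    by eventually_elim (use Tpos in \<open>auto simp: divide_less_eq less_imp_le\<close>)
  with Tr obtain N where N: "\<And>k. k \<ge> N \<Longrightarrow> T (Suc k) \<le> r * T k \<and> norm (x k - x (Suc k)) \<le> \<eta> * T k"
    unfolding eventually_sequentially by (metis (full_types) le_trans nle_le)
  have "dist (norm (x n) / T n) 0 < e" if n: "n \<ge> N" for n
  proof -
    have "norm (x n - x (n + m)) \<le> \<eta> * T n / (1 - r)" for m
    proof -
      have "(\<Sum>j<m. r ^ j) = (1 - r ^ m) / (1 - r)"
        using r1 by (simp add: sum_gp_strict)
      also have "\<dots> \<le> 1 / (1 - r)" using r0 r1 by (simp add: divide_right_mono)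
      finally have "\<eta> * T n * (\<Sum>j<m. r ^ j) \<le> \<eta> * T n * (1 / (1 - r))"
        using \<eta> Tpos[of n] by (intro mult_left_mono) auto
      then show ?thesis
        using telescoping_geometric_bound[where x=x and T=T, OF N r0 less_imp_le[OF \<eta>] n, of m] by simp
    qed
    moreover have "(\<lambda>m. norm (x n - x (n + m))) \<longlonglongrightarrow> norm (x n - 0)"
      using LIMSEQ_ignore_initial_segment[OF x0, of n] by (intro tendsto_intros) (simp add: add.commute)
    ultimately have "norm (x n) \<le> \<eta> * T n / (1 - r)"
      using tendsto_le[OF trivial_limit_sequentially tendsto_const] by fastforce
    also have "\<eta> * T n / (1 - r) = e / 2 * T n"
      using r1 by (simp add: \<eta>_def field_simps)
    finally have "norm (x n) / T n \<le> e / 2"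
      using Tpos[of n] by (simp add: divide_le_eq)
    then have "dist (norm (x n) / T n) 0 \<le> e / 2" using Tpos[of n] by (simp add: dist_real_def)
    then show ?thesis using e by linarith
  qed
  then show "eventually (\<lambda>n. dist (norm (x n) / T n) 0 < e) sequentially"
    unfolding eventually_sequentially by blast
qed

text \<open>Dividing the hypothesis by \<open>t\<^sub>n\<^sub>+\<^sub>1\<^sup>2\<close> bounds \<open>(y\<^sub>n/t\<^sub>n\<^sub>+\<^sub>1)\<^sup>2 + 2W\<^sub>n/t\<^sub>n\<^sub>+\<^sub>1\<close> by
  \<open>K\<rho>\<^sub>n - (\<rho>\<^sub>n + 1)\<^sup>2\<close>, where \<open>\<rho>\<^sub>n = t\<^sub>n/t\<^sub>n\<^sub>+\<^sub>1\<close>; the bound vanishes at \<open>\<rho> = \<alpha>\<close> since \<open>K = (\<alpha> + 1)\<^sup>2/\<alpha>\<close>.\<close>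
lemma slack_tendsto_zero:
  fixes t y W :: "nat \<Rightarrow> real"
  assumes tpos: "\<And>n. 0 < t n" and \<alpha>: "0 < \<alpha>" and ratio: "(\<lambda>n. t n / t (Suc n)) \<longlonglongrightarrow> \<alpha>"
    and W0: "\<And>n. 0 \<le> W n"
    and ineq: "\<And>n. (t n + t (Suc n))\<^sup>2 + (y n)\<^sup>2 + 2 * t (Suc n) * W n
                      \<le> (\<alpha> + 1)\<^sup>2 / \<alpha> * t n * t (Suc n)"
  shows "(\<lambda>n. y n / t n) \<longlonglongrightarrow> 0 \<and> (\<lambda>n. W n / t n) \<longlonglongrightarrow> 0"
proof -
  define K where "K = (\<alpha> + 1)\<^sup>2 / \<alpha>"
  define \<rho> where "\<rho> = (\<lambda>n. t n / t (Suc n))"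
  have slack: "(y n / t (Suc n))\<^sup>2 + 2 * (W n / t (Suc n)) \<le> K * \<rho> n - (\<rho> n + 1)\<^sup>2" for n
  proof -
    have t': "0 < t (Suc n)" by (rule tpos)
    have "((t n + t (Suc n))\<^sup>2 + (y n)\<^sup>2 + 2 * t (Suc n) * W n) / (t (Suc n))\<^sup>2
        \<le> K * t n * t (Suc n) / (t (Suc n))\<^sup>2"
      using ineq[of n] by (intro divide_right_mono) (simp_all add: K_def)
    moreover have "((t n + t (Suc n))\<^sup>2 + (y n)\<^sup>2 + 2 * t (Suc n) * W n) / (t (Suc n))\<^sup>2
        = (\<rho> n + 1)\<^sup>2 + (y n / t (Suc n))\<^sup>2 + 2 * (W n / t (Suc n))"
      using t' by (simp add: \<rho>_def power2_eq_square field_simps)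
    moreover have "K * t n * t (Suc n) / (t (Suc n))\<^sup>2 = K * \<rho> n"
      using t' by (simp add: \<rho>_def power2_eq_square)
    ultimately show ?thesis by simp
  qed
  have "(\<lambda>n. K * \<rho> n - (\<rho> n + 1)\<^sup>2) \<longlonglongrightarrow> K * \<alpha> - (\<alpha> + 1)\<^sup>2"
    unfolding \<rho>_def by (intro tendsto_intros ratio)
  then have bound: "(\<lambda>n. K * \<rho> n - (\<rho> n + 1)\<^sup>2) \<longlonglongrightarrow> 0"
    using \<alpha> by (simp add: K_def)
  have nonneg: "0 \<le> W n / t (Suc n)" for n using W0[of n] tpos[of "Suc n"] by simp
  have "norm ((y n / t (Suc n))\<^sup>2) \<le> K * \<rho> n - (\<rho> n + 1)\<^sup>2" for n
    using slack[of n] nonneg[of n] by simp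
  then have "(\<lambda>n. (y n / t (Suc n))\<^sup>2) \<longlonglongrightarrow> 0"
    by (intro Lim_null_comparison[OF always_eventually bound] allI)
  then have y': "(\<lambda>n. y n / t (Suc n)) \<longlonglongrightarrow> 0" by (rule tendsto_zero_of_power2)
  have "norm (2 * (W n / t (Suc n))) \<le> K * \<rho> n - (\<rho> n + 1)\<^sup>2" for n
  proof -
    have "norm (2 * (W n / t (Suc n))) = 2 * (W n / t (Suc n))" using W0[of n] tpos[of "Suc n"] by simp
    then show ?thesis using slack[of n] zero_le_power2[of "y n / t (Suc n)"] by linarith
  qed
  then have "(\<lambda>n. 2 * (W n / t (Suc n))) \<longlonglongrightarrow> 0"
    by (intro Lim_null_comparison[OF always_eventually bound] allI)
  from tendsto_divide[OF this tendsto_const[of 2]]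
  have W': "(\<lambda>n. W n / t (Suc n)) \<longlonglongrightarrow> 0" by simp
  have shift: "(\<lambda>n. t (Suc n) / t n) \<longlonglongrightarrow> 1 / \<alpha>"
    using tendsto_inverse[OF ratio] \<alpha> by (simp add: inverse_eq_divide)
  have "(\<lambda>n. y n / t (Suc n) * (t (Suc n) / t n)) \<longlonglongrightarrow> 0 * (1 / \<alpha>)"
    and "(\<lambda>n. W n / t (Suc n) * (t (Suc n) / t n)) \<longlonglongrightarrow> 0 * (1 / \<alpha>)"
    by (intro tendsto_intros y' W' shift)+
  moreover have cancel: "a / t (Suc n) * (t (Suc n) / t n) = a / t n" for a n
    using tpos[of "Suc n"] by simp
  ultimately show ?thesis by (simp only: cancel mult_zero_left)
qed

section \<open>Cayley transform and Siegel coordinates\<close>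

definition siegel_height :: "complex \<Rightarrow> complex^'n \<Rightarrow> real" where
  "siegel_height z w = Re z - (norm w)\<^sup>2"

definition siegel_pairing :: "complex \<Rightarrow> complex^'n \<Rightarrow> complex \<Rightarrow> complex^'n \<Rightarrow> complex" where
  "siegel_pairing z w z' w' = z + cnj z' - 2 * cinner w w'"

lemma Re_siegel_pairing:
  "Re (siegel_pairing z w z' w') = siegel_height z w + siegel_height z' w' + (norm (w - w'))\<^sup>2"
  by (simp add: siegel_pairing_def siegel_height_def norm_diff_power2_cinner)

lemma cayley_w_eq: "cayley_w i0 Z = (1 / (1 + Z$i0)) *s (Z - Z$i0 *s axis i0 1)"
  by (simp add: cayley_w_def vec_eq_iff axis_def)

lemma Re_cayley_z: "Re (cayley_z i0 Z) = (1 - (cmod (Z$i0))\<^sup>2) / (cmod (1 + Z$i0))\<^sup>2"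
  unfolding cayley_z_def by (simp only: Re_divide cmod_power2) (simp add: algebra_simps power2_eq_square)

lemma norm_cayley_w:
  "(norm (cayley_w i0 Z))\<^sup>2 = (norm (Z - Z$i0 *s axis i0 1))\<^sup>2 / (cmod (1 + Z$i0))\<^sup>2"
  by (simp only: cayley_w_eq norm_vector_smult) (simp add: power_mult_distrib norm_divide power_divide)

lemma siegel_height_cayley:
  "siegel_height (cayley_z i0 Z) (cayley_w i0 Z) = (1 - (norm Z)\<^sup>2) / (cmod (1 + Z$i0))\<^sup>2"
  unfolding siegel_height_def Re_cayley_z norm_cayley_w norm_axis_split[of Z i0]
  by (simp add: diff_divide_distrib add_divide_distrib)

lemma norm_one_plus_cnj: "cmod (1 + cnj x) = cmod (1 + x)"
  by (metis complex_cnj_add complex_cnj_one complex_mod_cnj)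

lemma siegel_pairing_cayley:
  assumes "Z \<in> unit_ball" "W \<in> unit_ball"
  shows "siegel_pairing (cayley_z i0 Z) (cayley_w i0 Z) (cayley_z i0 W) (cayley_w i0 W)
    = 2 * (1 - cinner Z W) / ((1 + Z$i0) * (1 + cnj (W$i0)))"
proof -
  define e where "e = axis i0 (1::complex)"
  have Z1: "1 + Z$i0 \<noteq> 0" and "1 + W$i0 \<noteq> 0"
    using one_plus_nonzero norm_coord_less_1 assms by auto
  then have W1: "1 + cnj (W$i0) \<noteq> 0"
    by (metis norm_one_plus_cnj zero_less_norm_iff)
  have alg: "(1 - x) / (1 + x) + (1 - y) / (1 + y) - 2 * (c / ((1 + x) * (1 + y)))
      = 2 * (1 - (x * y + c)) / ((1 + x) * (1 + y))" if "1 + x \<noteq> 0" "1 + y \<noteq> 0" for x y c :: complex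
    using that by (simp add: divide_simps) (simp add: algebra_simps)
  have "cinner (cayley_w i0 Z) (cayley_w i0 W)
      = cinner (Z - Z$i0 *s e) (W - W$i0 *s e) / ((1 + Z$i0) * (1 + cnj (W$i0)))"
    by (simp only: cayley_w_eq cinner_smult_left cinner_smult_right e_def) simp
  then have "siegel_pairing (cayley_z i0 Z) (cayley_w i0 Z) (cayley_z i0 W) (cayley_w i0 W)
      = (1 - Z$i0) / (1 + Z$i0) + (1 - cnj (W$i0)) / (1 + cnj (W$i0))
        - 2 * (cinner (Z - Z$i0 *s e) (W - W$i0 *s e) / ((1 + Z$i0) * (1 + cnj (W$i0))))"
    by (simp add: siegel_pairing_def cayley_z_def)
  also have "\<dots> = 2 * (1 - cinner Z W) / ((1 + Z$i0) * (1 + cnj (W$i0)))"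
    unfolding alg[OF Z1 W1] cinner_axis_split[of Z W i0, folded e_def] ..
  finally show ?thesis .
qed

lemma special_quotient_cayley:
  fixes Z :: "complex^'n" and i0 :: 'n
  defines "e \<equiv> axis i0 (1::complex)"
  assumes "Z \<in> unit_ball"
  shows "(norm (Z - cinner Z e *s e))\<^sup>2 / (1 - (cmod (cinner Z e))\<^sup>2)
    = (norm (cayley_w i0 Z))\<^sup>2 / Re (cayley_z i0 Z)"
proof -
  have "1 + Z$i0 \<noteq> 0" using one_plus_nonzero norm_coord_less_1 assms by auto
  then show ?thesis by (simp add: e_def cinner_axis norm_cayley_w Re_cayley_z)
qed

text \<open>A bound on the pseudo-hyperbolic distance becomes a bound on the Siegel pairing, because
  \<open>|1 - (Z,W)|\<^sup>2 = (1 - d(Z,W)\<^sup>2)\<^sup>-\<^sup>1 (1 - |Z|\<^sup>2)(1 - |W|\<^sup>2)\<close>.\<close>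
lemma siegel_pairing_cayley_bound:
  assumes Z: "Z \<in> unit_ball" and W: "W \<in> unit_ball" and a: "0 \<le> a" "a < 1" and d: "dB Z W \<le> a"
  shows "(cmod (siegel_pairing (cayley_z i0 Z) (cayley_w i0 Z) (cayley_z i0 W) (cayley_w i0 W)))\<^sup>2
    \<le> 4 / (1 - a\<^sup>2) * siegel_height (cayley_z i0 Z) (cayley_w i0 Z)
                     * siegel_height (cayley_z i0 W) (cayley_w i0 W)"
proof -
  define E where "E = (cmod (1 - cinner Z W))\<^sup>2"
  define sZ sW where "sZ = 1 - (norm Z)\<^sup>2" and "sW = 1 - (norm W)\<^sup>2"
  define qZ qW where "qZ = (cmod (1 + Z$i0))\<^sup>2" and "qW = (cmod (1 + W$i0))\<^sup>2"
  have E0: "E > 0" using one_minus_cinner_nonzero[of Z W] Z W by (simp add: E_def unit_ball_def)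
  have q0: "qZ > 0" "qW > 0"
    using one_plus_nonzero norm_coord_less_1 Z W by (auto simp: qZ_def qW_def)
  have a2: "1 - a\<^sup>2 > 0" using a by (simp add: abs_square_less_1)
  have "1 - pick_ratio Z W \<le> a\<^sup>2"
    using d unfolding dB_eq_pick_ratio by (metis sqrt_le_D)
  then have "(1 - a\<^sup>2) * E \<le> sZ * sW"
    using E0 by (simp add: pick_ratio_def E_def sZ_def sW_def field_simps)
  then have "E \<le> sZ * sW / (1 - a\<^sup>2)"
    using a2 by (simp add: field_simps)
  then have "4 * E / (qZ * qW) \<le> 4 * (sZ * sW / (1 - a\<^sup>2)) / (qZ * qW)"
    using q0 by (intro divide_right_mono) auto
  also have "\<dots> = 4 / (1 - a\<^sup>2) * (sZ / qZ) * (sW / qW)"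
    by simp
  finally have "4 * E / (qZ * qW) \<le> 4 / (1 - a\<^sup>2) * (sZ / qZ) * (sW / qW)" .
  moreover have "(cmod (siegel_pairing (cayley_z i0 Z) (cayley_w i0 Z) (cayley_z i0 W) (cayley_w i0 W)))\<^sup>2
      = 4 * E / (qZ * qW)"
    unfolding siegel_pairing_cayley[OF Z W] E_def qZ_def qW_def
    by (simp only: norm_divide norm_mult power_divide power_mult_distrib norm_one_plus_cnj) simp
  ultimately show ?thesis by (simp add: siegel_height_cayley sZ_def sW_def qZ_def qW_def)
qed

corollary siegel_pairing_cayley_bound_multiplier:
  assumes Z: "Z \<in> unit_ball" and W: "W \<in> unit_ball" and \<alpha>: "1 < \<alpha>"
    and d: "dB Z W \<le> (\<alpha> - 1) / (\<alpha> + 1)"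
  shows "(cmod (siegel_pairing (cayley_z i0 Z) (cayley_w i0 Z) (cayley_z i0 W) (cayley_w i0 W)))\<^sup>2
    \<le> (\<alpha> + 1)\<^sup>2 / \<alpha> * siegel_height (cayley_z i0 Z) (cayley_w i0 Z)
                       * siegel_height (cayley_z i0 W) (cayley_w i0 W)"
proof -
  have "1 - ((\<alpha> - 1) / (\<alpha> + 1))\<^sup>2 = ((\<alpha> + 1)\<^sup>2 - (\<alpha> - 1)\<^sup>2) / (\<alpha> + 1)\<^sup>2"
    using \<alpha> by (simp only: power_divide) (simp add: diff_divide_distrib)
  also have "(\<alpha> + 1)\<^sup>2 - (\<alpha> - 1)\<^sup>2 = 4 * \<alpha>"
    by (simp add: power2_eq_square algebra_simps)
  finally have "4 / (1 - ((\<alpha> - 1) / (\<alpha> + 1))\<^sup>2) = (\<alpha> + 1)\<^sup>2 / \<alpha>"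
    using \<alpha> by simp
  with siegel_pairing_cayley_bound[OF Z W _ _ d] \<alpha> show ?thesis by simp
qed

lemma siegel_height_cayley_pos:
  "Z \<in> unit_ball \<Longrightarrow> 0 < siegel_height (cayley_z i0 Z) (cayley_w i0 Z)"
  using one_plus_nonzero[OF norm_coord_less_1, of Z i0]
  by (simp add: siegel_height_cayley unit_ball_def abs_square_less_1)

lemma cayley_tendsto_origin:
  assumes "Z \<longlonglongrightarrow> axis i0 1"
  shows "(\<lambda>n. cayley_z i0 (Z n)) \<longlonglongrightarrow> 0" and "(\<lambda>n. cayley_w i0 (Z n)) \<longlonglongrightarrow> 0"
proof -
  have u: "(\<lambda>n. Z n $ i0) \<longlonglongrightarrow> 1"
    using tendsto_vec_nth[OF assms, of i0] by simp
  have "(\<lambda>n. (1 - Z n $ i0) / (1 + Z n $ i0)) \<longlonglongrightarrow> (1 - 1) / (1 + 1)"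
    by (intro tendsto_intros u) simp
  then show "(\<lambda>n. cayley_z i0 (Z n)) \<longlonglongrightarrow> 0" by (simp add: cayley_z_def)
  have "(\<lambda>n. ((norm (Z n))\<^sup>2 - (cmod (Z n $ i0))\<^sup>2) / (cmod (1 + Z n $ i0))\<^sup>2)
      \<longlonglongrightarrow> ((norm (axis i0 (1::complex)))\<^sup>2 - (cmod 1)\<^sup>2) / (cmod (1 + 1))\<^sup>2"
    by (intro tendsto_intros assms u) simp
  moreover have "(norm (cayley_w i0 (Z n)))\<^sup>2
      = ((norm (Z n))\<^sup>2 - (cmod (Z n $ i0))\<^sup>2) / (cmod (1 + Z n $ i0))\<^sup>2" for n
    using norm_axis_split[of "Z n" i0] by (simp add: norm_cayley_w)
  ultimately have "(\<lambda>n. (norm (cayley_w i0 (Z n)))\<^sup>2) \<longlonglongrightarrow> 0"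
    by (simp add: norm_axis_one)
  then show "(\<lambda>n. cayley_w i0 (Z n)) \<longlonglongrightarrow> 0"
    by (subst tendsto_norm_zero_iff[symmetric]) (rule tendsto_zero_of_power2)
qed

lemma norm_siegel_pairing_ge:
  assumes "0 \<le> siegel_height z w" "0 \<le> siegel_height z' w'"
  shows "(siegel_height z w + siegel_height z' w')\<^sup>2 + (Im (siegel_pairing z w z' w'))\<^sup>2
      + 2 * siegel_height z' w' * (norm (w - w'))\<^sup>2 \<le> (cmod (siegel_pairing z w z' w'))\<^sup>2"
proof -
  define h h' d where "h = siegel_height z w" and "h' = siegel_height z' w'" and "d = (norm (w - w'))\<^sup>2"
  have "(cmod (siegel_pairing z w z' w'))\<^sup>2 = (h + h' + d)\<^sup>2 + (Im (siegel_pairing z w z' w'))\<^sup>2"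
    by (simp add: cmod_power2 Re_siegel_pairing h_def h'_def d_def)
  moreover have "0 \<le> d" "0 \<le> h" "0 \<le> h'" using assms by (simp_all add: h_def h'_def d_def)
  ultimately show ?thesis
    unfolding h_def[symmetric] h'_def[symmetric] d_def[symmetric]
    by (simp add: power2_eq_square algebra_simps)
qed

lemma siegel_height_ratio_le:
  assumes h: "0 < siegel_height z w" "0 < siegel_height z' w'" and \<alpha>: "1 < \<alpha>"
    and pair: "(cmod (siegel_pairing z w z' w'))\<^sup>2
               \<le> (\<alpha> + 1)\<^sup>2 / \<alpha> * siegel_height z w * siegel_height z' w'"
  shows "siegel_height z w / siegel_height z' w' \<le> \<alpha>"
proof (rule le_of_quadratic_ratio_bound[OF _ \<alpha>])
  define h h' where "h = siegel_height z w" and "h' = siegel_height z' w'"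
  have hp: "0 < h" "0 < h'" using h by (simp_all add: h_def h'_def)
  have "(h + h')\<^sup>2 \<le> (\<alpha> + 1)\<^sup>2 / \<alpha> * h * h'"
    using norm_siegel_pairing_ge[of z w z' w'] pair h unfolding h_def h'_def
    by (smt (verit) mult_nonneg_nonneg zero_le_power2)
  then have "(h + h')\<^sup>2 / h'\<^sup>2 \<le> (\<alpha> + 1)\<^sup>2 / \<alpha> * h * h' / h'\<^sup>2"
    by (rule divide_right_mono) simp
  moreover have "(h + h')\<^sup>2 / h'\<^sup>2 = (h / h' + 1)\<^sup>2"
    using hp by (simp add: power_divide[symmetric] add_divide_distrib)
  moreover have "(\<alpha> + 1)\<^sup>2 / \<alpha> * h * h' / h'\<^sup>2 = (\<alpha> + 1)\<^sup>2 / \<alpha> * (h / h')"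
    using hp by (simp add: power2_eq_square)
  ultimately show "(h / h' + 1)\<^sup>2 \<le> (\<alpha> + 1)\<^sup>2 / \<alpha> * (h / h')" by simp
  show "0 < h / h'" using hp by simp
qed

lemma abs_Im_diff_le_siegel_pairing:
  "\<bar>Im z - Im z'\<bar> \<le> \<bar>Im (siegel_pairing z w z' w')\<bar> + 2 * (norm w * norm (w - w'))"
proof -
  have "Im z - Im z' = Im (siegel_pairing z w z' w') + 2 * Im (cinner w w')"
    by (simp add: siegel_pairing_def)
  then show ?thesis using abs_Im_cinner_le[of w w'] by simp
qed

lemma siegel_increments_tendsto_zero:
  fixes z :: "nat \<Rightarrow> complex" and w :: "nat \<Rightarrow> complex^'n"
  defines "t \<equiv> \<lambda>n. siegel_height (z n) (w n)"
  assumes tpos: "\<And>n. 0 < t n" and \<alpha>: "1 < \<alpha>"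
    and ratio: "(\<lambda>n. t n / t (Suc n)) \<longlonglongrightarrow> \<alpha>"
    and pair: "\<And>n. (cmod (siegel_pairing (z n) (w n) (z (Suc n)) (w (Suc n))))\<^sup>2
                     \<le> (\<alpha> + 1)\<^sup>2 / \<alpha> * t n * t (Suc n)"
  shows "(\<lambda>n. Im (siegel_pairing (z n) (w n) (z (Suc n)) (w (Suc n))) / t n) \<longlonglongrightarrow> 0"
    and "(\<lambda>n. norm (w n - w (Suc n)) / sqrt (t n)) \<longlonglongrightarrow> 0"
proof -
  define P where "P = (\<lambda>n. siegel_pairing (z n) (w n) (z (Suc n)) (w (Suc n)))"
  have "(t n + t (Suc n))\<^sup>2 + (Im (P n))\<^sup>2 + 2 * t (Suc n) * (norm (w n - w (Suc n)))\<^sup>2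
      \<le> (\<alpha> + 1)\<^sup>2 / \<alpha> * t n * t (Suc n)" for n
    using norm_siegel_pairing_ge[of "z n" "w n" "z (Suc n)" "w (Suc n)"] pair[of n] tpos[of n] tpos[of "Suc n"]
    unfolding t_def P_def by linarith
  then have lims: "(\<lambda>n. Im (P n) / t n) \<longlonglongrightarrow> 0 \<and> (\<lambda>n. (norm (w n - w (Suc n)))\<^sup>2 / t n) \<longlonglongrightarrow> 0"
    using \<alpha> by (intro slack_tendsto_zero[OF tpos _ ratio]) auto
  then show "(\<lambda>n. Im (P n) / t n) \<longlonglongrightarrow> 0" unfolding P_def by blast
  have eq: "(norm (w n - w (Suc n)) / sqrt (t n))\<^sup>2 = (norm (w n - w (Suc n)))\<^sup>2 / t n" for n
    using tpos[of n] by (simp add: power_divide)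
  show "(\<lambda>n. norm (w n - w (Suc n)) / sqrt (t n)) \<longlonglongrightarrow> 0"
  proof (rule tendsto_zero_of_power2)
    show "(\<lambda>n. (norm (w n - w (Suc n)) / sqrt (t n))\<^sup>2) \<longlonglongrightarrow> 0"
      unfolding eq using lims by blast
  qed
qed

lemma siegel_tangential_convergence:
  fixes z :: "nat \<Rightarrow> complex" and w :: "nat \<Rightarrow> complex^'n"
  defines "t \<equiv> \<lambda>n. siegel_height (z n) (w n)"
  assumes tpos: "\<And>n. 0 < t n" and \<alpha>: "1 < \<alpha>"
    and Im_lim: "(\<lambda>n. Im (z n)) \<longlonglongrightarrow> 0" and w_lim: "w \<longlonglongrightarrow> 0"
    and ratio: "(\<lambda>n. t n / t (Suc n)) \<longlonglongrightarrow> \<alpha>"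
    and pair: "\<And>n. (cmod (siegel_pairing (z n) (w n) (z (Suc n)) (w (Suc n))))\<^sup>2
                     \<le> (\<alpha> + 1)\<^sup>2 / \<alpha> * t n * t (Suc n)"
  shows "(\<lambda>n. Im (z n) / t n) \<longlonglongrightarrow> 0 \<and> (\<lambda>n. (norm (w n))\<^sup>2 / t n) \<longlonglongrightarrow> 0"
proof -
  define P where "P = (\<lambda>n. siegel_pairing (z n) (w n) (z (Suc n)) (w (Suc n)))"
  have ImP: "(\<lambda>n. Im (P n) / t n) \<longlonglongrightarrow> 0"
    and dw: "(\<lambda>n. norm (w n - w (Suc n)) / sqrt (t n)) \<longlonglongrightarrow> 0"
    using siegel_increments_tendsto_zero[of z w \<alpha>] tpos \<alpha> ratio pair unfolding t_def P_def by auto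
  have sqrt_t: "sqrt (t n) > 0" "(sqrt (t n))\<^sup>2 = t n" for n using tpos[of n] by simp_all
  define \<beta> where "\<beta> = (1 + \<alpha>) / 2"
  have \<beta>: "1 < \<beta>" "\<beta> < \<alpha>" using \<alpha> by (auto simp: \<beta>_def)
  have decay: "eventually (\<lambda>n. t (Suc n) \<le> (1 / \<beta>) * t n) sequentially"
    using order_tendstoD(1)[OF ratio \<beta>(2)]
    by eventually_elim (use tpos \<beta> in \<open>simp add: field_simps\<close>)
  have "eventually (\<lambda>n. sqrt (t (Suc n)) \<le> (1 / sqrt \<beta>) * sqrt (t n)) sequentially"
    using decay by eventually_elim (metis real_sqrt_divide real_sqrt_le_mono real_sqrt_mult real_sqrt_one)
  then have w_t: "(\<lambda>n. norm (w n) / sqrt (t n)) \<longlonglongrightarrow> 0"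
    using \<beta> by (intro tendsto_zero_relative_of_increments[where r="1 / sqrt \<beta>",
          OF w_lim sqrt_t(1) _ _ _ dw]) auto
  define g where "g = (\<lambda>n. \<bar>Im (P n) / t n\<bar>
    + 2 * ((norm (w n) / sqrt (t n)) * (norm (w n - w (Suc n)) / sqrt (t n))))"
  have bound: "norm (norm (Im (z n) - Im (z (Suc n))) / t n) \<le> g n" for n
    using abs_Im_diff_le_siegel_pairing[of "z n" "z (Suc n)" "w n" "w (Suc n)"] tpos[of n] sqrt_t[of n]
    by (simp add: g_def P_def field_simps)
  have "g \<longlonglongrightarrow> \<bar>0\<bar> + 2 * (0 * 0)"
    unfolding g_def by (intro tendsto_intros ImP dw w_t)
  then have "g \<longlonglongrightarrow> 0" by simp
  then have "(\<lambda>n. norm (Im (z n) - Im (z (Suc n))) / t n) \<longlonglongrightarrow> 0"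
    by (rule Lim_null_comparison[OF always_eventually, rotated]) (use bound in blast)
  then have "(\<lambda>n. norm (Im (z n)) / t n) \<longlonglongrightarrow> 0"
    using \<beta> by (intro tendsto_zero_relative_of_increments[where r="1 / \<beta>", OF Im_lim tpos decay]) auto
  moreover have "\<bar>t n\<bar> = t n" for n using tpos[of n] by simp
  ultimately have "(\<lambda>n. \<bar>Im (z n) / t n\<bar>) \<longlonglongrightarrow> 0"
    by simp
  then have "(\<lambda>n. Im (z n) / t n) \<longlonglongrightarrow> 0"
    by (simp only: tendsto_rabs_zero_iff)
  moreover have "(\<lambda>n. (norm (w n) / sqrt (t n))\<^sup>2) \<longlonglongrightarrow> 0\<^sup>2"
    using w_t by (intro tendsto_intros)
  then have "(\<lambda>n. (norm (w n))\<^sup>2 / t n) \<longlonglongrightarrow> 0"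
    by (simp add: power_divide sqrt_t)
  ultimately show ?thesis ..
qed

lemma tendsto_Re_div_siegel_height:
  assumes "\<And>n. 0 < siegel_height (z n) (w n)"
    and "(\<lambda>n. (norm (w n))\<^sup>2 / siegel_height (z n) (w n)) \<longlonglongrightarrow> 0"
  shows "(\<lambda>n. Re (z n) / siegel_height (z n) (w n)) \<longlonglongrightarrow> 1"
proof -
  have "Re (z n) / siegel_height (z n) (w n) = 1 + (norm (w n))\<^sup>2 / siegel_height (z n) (w n)" for n
    using assms(1)[of n] by (simp add: siegel_height_def field_simps)
  then show ?thesis using tendsto_add[OF tendsto_const assms(2), of 1] by simp
qed

text \<open>The depths \<open>1 - |Z\<^sub>n|\<^sup>2\<close> and the heights \<open>t\<^sub>n\<close> differ by the factor \<open>|1 + (Z\<^sub>n)\<^sub>1|\<^sup>2 \<rightarrow> 4\<close>,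
  so the lower bound on the depth ratios transfers to the height ratios.\<close>
lemma backward_orbit_height_ratio:
  fixes f :: "complex^'n \<Rightarrow> complex^'n" and Z :: "nat \<Rightarrow> complex^'n" and i0 :: 'n
  defines "t \<equiv> \<lambda>n. siegel_height (cayley_z i0 (Z n)) (cayley_w i0 (Z n))"
  assumes f: "analytic_selfmap_ball f" and rep: "boundary_repelling_fp f (axis i0 1) \<alpha>"
    and Zin: "\<And>n. Z n \<in> unit_ball" and bwd: "\<And>n. f (Z (Suc n)) = Z n"
    and conv: "Z \<longlonglongrightarrow> axis i0 1"
    and le: "\<And>n. t n / t (Suc n) \<le> \<alpha>"
  shows "(\<lambda>n. t n / t (Suc n)) \<longlonglongrightarrow> \<alpha>"
proof (rule order_tendstoI)
  fix y assume "y > \<alpha>"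
  then show "eventually (\<lambda>n. t n / t (Suc n) < y) sequentially"
    using le by (auto intro: always_eventually le_less_trans)
next
  fix y assume y: "y < \<alpha>"
  define c where "c = (y + \<alpha>) / 2"
  define q where "q = (\<lambda>n. (cmod (1 + Z n $ i0))\<^sup>2)"
  have q0: "q n > 0" for n
    using one_plus_nonzero[OF norm_coord_less_1[OF Zin]] by (simp add: q_def)
  have "(\<lambda>n. Z n $ i0) \<longlonglongrightarrow> 1" using tendsto_vec_nth[OF conv, of i0] by simp
  then have "(\<lambda>n. q (Suc n) / q n) \<longlonglongrightarrow> (cmod (1 + 1))\<^sup>2 / (cmod (1 + 1))\<^sup>2"
    unfolding q_def by (intro tendsto_intros LIMSEQ_Suc) simp_all
  then have "(\<lambda>n. c * (q (Suc n) / q n)) \<longlonglongrightarrow> c" using tendsto_mult_left by fastforce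
  moreover have "y < c" using y by (simp add: c_def)
  ultimately have "eventually (\<lambda>n. y < c * (q (Suc n) / q n)) sequentially"
    by (rule order_tendstoD)
  moreover have "eventually (\<lambda>n. c * (1 - (norm (Z (Suc n)))\<^sup>2) \<le> 1 - (norm (Z n))\<^sup>2) sequentially"
    using y by (intro backward_orbit_depth_ratio[OF f rep Zin bwd conv]) (simp add: c_def)
  ultimately show "eventually (\<lambda>n. y < t n / t (Suc n)) sequentially"
  proof eventually_elim
    case (elim n)
    have "c \<le> (1 - (norm (Z n))\<^sup>2) / (1 - (norm (Z (Suc n)))\<^sup>2)"
      using elim(2) Zin[of "Suc n"] by (simp add: le_divide_eq unit_ball_def abs_square_less_1)
    then have "c * (q (Suc n) / q n)
        \<le> (1 - (norm (Z n))\<^sup>2) / (1 - (norm (Z (Suc n)))\<^sup>2) * (q (Suc n) / q n)"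
      using q0[of n] q0[of "Suc n"] by (intro mult_right_mono) simp_all
    also have "\<dots> = t n / t (Suc n)"
      using q0[of n] q0[of "Suc n"] by (simp add: t_def siegel_height_cayley q_def)
    finally show ?case using elim(1) by linarith
  qed
qed

theorem mainTheorem7:
  fixes f :: "complex^'n \<Rightarrow> complex^'n"
    and i0 :: 'n
    and \<alpha> :: real
    and Z :: "nat \<Rightarrow> complex^'n"
  defines "e1 \<equiv> axis i0 (1::complex)"
  defines "a \<equiv> (\<alpha> - 1) / (\<alpha> + 1)"
  defines "zz \<equiv> (\<lambda>n. cayley_z i0 (Z n))"
  defines "ww \<equiv> (\<lambda>n. cayley_w i0 (Z n))"
  defines "t \<equiv> (\<lambda>n. Re (zz n) - (norm (ww n))\<^sup>2)"
  assumes f: "analytic_selfmap_ball f"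
    and rep: "boundary_repelling_fp f e1 \<alpha>"
    and Zin: "\<And>n. Z n \<in> unit_ball"
    and bwd: "\<And>n. f (Z (Suc n)) = Z n"
    and conv: "Z \<longlonglongrightarrow> e1"
    and dstep: "\<And>n. dB (Z n) (Z (Suc n)) \<le> a"
  shows "(\<lambda>n. Re (zz n) / t n) \<longlonglongrightarrow> 1 \<and>
    (\<lambda>n. Im (zz n) / t n) \<longlonglongrightarrow> 0 \<and>
    (\<lambda>n. (norm (ww n))\<^sup>2 / t n) \<longlonglongrightarrow> 0 \<and>
    (\<lambda>n. t n / t (Suc n)) \<longlonglongrightarrow> \<alpha> \<and>
    (\<lambda>n. (norm (Z n - cinner (Z n) e1 *s e1))\<^sup>2 / (1 - (cmod (cinner (Z n) e1))\<^sup>2)) \<longlonglongrightarrow> 0"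
proof -
  have \<alpha>: "1 < \<alpha>" using rep by (simp add: boundary_repelling_fp_def)
  have conv': "Z \<longlonglongrightarrow> axis i0 1" using conv by (simp add: e1_def)
  have t_eq: "t = (\<lambda>n. siegel_height (zz n) (ww n))" by (simp add: t_def siegel_height_def)
  have tpos: "0 < siegel_height (zz n) (ww n)" for n
    using siegel_height_cayley_pos[OF Zin] by (simp add: zz_def ww_def)
  have pair: "(cmod (siegel_pairing (zz n) (ww n) (zz (Suc n)) (ww (Suc n))))\<^sup>2
      \<le> (\<alpha> + 1)\<^sup>2 / \<alpha> * siegel_height (zz n) (ww n) * siegel_height (zz (Suc n)) (ww (Suc n))" for n
    using siegel_pairing_cayley_bound_multiplier[OF Zin Zin \<alpha> dstep[unfolded a_def]]
    by (simp add: zz_def ww_def)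
  have ratio: "(\<lambda>n. t n / t (Suc n)) \<longlonglongrightarrow> \<alpha>"
    using backward_orbit_height_ratio[OF f rep[unfolded e1_def] Zin bwd conv']
      siegel_height_ratio_le[OF tpos tpos \<alpha> pair]
    by (simp add: t_eq zz_def ww_def)
  have "(\<lambda>n. Im (zz n) / t n) \<longlonglongrightarrow> 0 \<and> (\<lambda>n. (norm (ww n))\<^sup>2 / t n) \<longlonglongrightarrow> 0"
    unfolding t_eq
  proof (rule siegel_tangential_convergence[of zz ww \<alpha>, OF tpos \<alpha> _ _ _ pair])
    show "(\<lambda>n. Im (zz n)) \<longlonglongrightarrow> 0"
      using tendsto_Im[OF cayley_tendsto_origin(1)[OF conv']] by (simp add: zz_def)
    show "ww \<longlonglongrightarrow> 0" using cayley_tendsto_origin(2)[OF conv'] by (simp add: ww_def)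
  qed (use ratio in \<open>simp add: t_eq\<close>)
  then have Im: "(\<lambda>n. Im (zz n) / t n) \<longlonglongrightarrow> 0" and w: "(\<lambda>n. (norm (ww n))\<^sup>2 / t n) \<longlonglongrightarrow> 0"
    by auto
  have Re: "(\<lambda>n. Re (zz n) / t n) \<longlonglongrightarrow> 1"
    using tendsto_Re_div_siegel_height[OF tpos w[unfolded t_eq]] by (simp add: t_eq)
  have "(\<lambda>n. ((norm (ww n))\<^sup>2 / t n) / (Re (zz n) / t n)) \<longlonglongrightarrow> 0 / 1"
    by (intro tendsto_intros w Re) simp
  moreover have "((norm (ww n))\<^sup>2 / t n) / (Re (zz n) / t n)
      = (norm (Z n - cinner (Z n) e1 *s e1))\<^sup>2 / (1 - (cmod (cinner (Z n) e1))\<^sup>2)" for n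
    using tpos[of n] special_quotient_cayley[OF Zin, of n i0] by (simp add: t_eq e1_def zz_def ww_def)
  ultimately show ?thesis using Re Im w ratio by simp
qed

end
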